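(* Let $\vec H$ be a DAG and let $u,v$ be two sources of $\vec H$ such that there is a vertex $w\in R(u)\cap R(v)$ with $w\notin R(s)$ for every source $s\notin\{u,v\}$. Then in every DAG elimination forest of $\vec H$, the nodes $u$ and $v$ lie on a common root-to-leaf path (i.e., one is an ancestor of the other).
   Context: For a DAG $\vec H$, a source is a vertex of in-degree $0$; $R(s)$ is the set of vertices reachable from $s$ by a directed path. A DAG elimination forest of a DAG $\vec H$ is defined recursively: if $\vec H$ is empty, it is the empty forest; if the underlying undirected graph of $\vec H$ is disconnected, it is the union of DAG elimination forests (trees) of its connected components; if the underlying graph is connected and $\vec H$ has exactly one source $s$, it is the single-node tree $s$; otherwise (connected, at least two sources) it is a tree whose root is an arbitrarily chosen source $s$ of $\vec H$ and whose subtrees are the trees of a DAG elimination forest of the DAG obtained from $\vec H$ by deleting $s$ and all vertices reachable from $s$. Its nodes are thus the sources of $\vec H$. *)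

theory Defs
  imports Main
begin

definition is_dag :: "'a set \<Rightarrow> ('a \<times> 'a) set \<Rightarrow> bool" where
  "is_dag V E \<longleftrightarrow> finite V \<and> E \<subseteq> V \<times> V \<and> acyclic E"

definition sources :: "'a set \<Rightarrow> ('a \<times> 'a) set \<Rightarrow> 'a set" where
  "sources V E = {s \<in> V. \<forall>x. (x, s) \<notin> E}"

definition reach :: "('a \<times> 'a) set \<Rightarrow> 'a \<Rightarrow> 'a set" where
  "reach E s = {x. (s, x) \<in> E\<^sup>*}"

definition ug_connected :: "'a set \<Rightarrow> ('a \<times> 'a) set \<Rightarrow> bool" where
  "ug_connected V E \<longleftrightarrow> V \<noteq> {} \<and> (\<forall>x\<in>V. \<forall>y\<in>V. (x, y) \<in> (E \<union> E\<inverse>)\<^sup>*)"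

definition ug_component :: "'a set \<Rightarrow> ('a \<times> 'a) set \<Rightarrow> 'a \<Rightarrow> 'a set" where
  "ug_component V E x = {y \<in> V. (x, y) \<in> (E \<union> E\<inverse>)\<^sup>*}"

definition ug_components :: "'a set \<Rightarrow> ('a \<times> 'a) set \<Rightarrow> 'a set set" where
  "ug_components V E = ug_component V E ` V"

text \<open>A forest is represented by its node set N and its
  strict ancestor relation A: (x, y) \<in> A iff x is a proper ancestor of y.
  "elim_forest V E N A" means (N, A) is a DAG elimination forest of (V, E).\<close>

inductive elim_forest :: "'a set \<Rightarrow> ('a \<times> 'a) set \<Rightarrow> 'a set \<Rightarrow> ('a \<times> 'a) set \<Rightarrow> bool" where
  empty: "elim_forest {} {} {} {}"
| disconnected:
    "\<lbrakk> V \<noteq> {}; \<not> ug_connected V E;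
       \<forall>C\<in>ug_components V E. elim_forest C (E \<inter> (C \<times> C)) (NF C) (AF C) \<rbrakk>
     \<Longrightarrow> elim_forest V E (\<Union>C\<in>ug_components V E. NF C) (\<Union>C\<in>ug_components V E. AF C)"
| one_source:
    "\<lbrakk> ug_connected V E; sources V E = {s} \<rbrakk> \<Longrightarrow> elim_forest V E {s} {}"
| many_sources:
    "\<lbrakk> ug_connected V E; s \<in> sources V E; t \<in> sources V E; t \<noteq> s;
       elim_forest (V - reach E s) (E \<inter> ((V - reach E s) \<times> (V - reach E s))) N A \<rbrakk>
     \<Longrightarrow> elim_forest V E (insert s N) (A \<union> {s} \<times> N)"

end

theory Submission
  imports Defs
begin

text \<open>Every step of the recursive construction either passes to the component containing w
  or deletes R(s) for a source s chosen as root. If s is neither u nor v, then w is not in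
  R(s). In both cases the surviving vertex set is closed under predecessors and contains w,
  so it keeps every path into w and creates no new sources: the hypothesis on u, v, w is
  inherited. Hence u and v survive until one of them, say u, is chosen as a root. At that
  moment v is still a source of the remaining graph, and every source becomes a node of the
  forest, so v lies in the subtree below u.\<close>

definition pred_closed :: "('a \<times> 'a) set \<Rightarrow> 'a set \<Rightarrow> bool" where
  "pred_closed E S \<longleftrightarrow> (\<forall>x y. (x, y) \<in> E \<longrightarrow> y \<in> S \<longrightarrow> x \<in> S)"

lemma rtrancl_restrict_pred_closed:
  assumes "pred_closed E S" and "(x, w) \<in> E\<^sup>*" and "w \<in> S"
  shows "(x, w) \<in> (E \<inter> S \<times> S)\<^sup>* \<and> x \<in> S"
  using assms(2,3)
proof (induction rule: converse_rtrancl_induct)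
  case base
  then show ?case by simp
next
  case (step y z)
  then have "y \<in> S" using assms(1) by (auto simp: pred_closed_def)
  with step show ?case by (blast intro: converse_rtrancl_into_rtrancl)
qed

lemma mem_reach_restrict_iff:
  assumes "pred_closed E S" and "w \<in> S"
  shows "w \<in> reach (E \<inter> S \<times> S) x \<longleftrightarrow> w \<in> reach E x"
  using rtrancl_restrict_pred_closed[OF assms(1) _ assms(2)] rtrancl_mono[of "E \<inter> S \<times> S" E]
  by (auto simp: reach_def)

lemma sources_restrict_pred_closed:
  assumes "S \<subseteq> V" and "pred_closed E S"
  shows "sources S (E \<inter> S \<times> S) = sources V E \<inter> S"
  using assms by (auto simp: sources_def pred_closed_def)

lemma pred_closed_ug_component:
  assumes "E \<subseteq> V \<times> V"
  shows "pred_closed E (ug_component V E x)"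
  unfolding pred_closed_def ug_component_def
proof (intro allI impI)
  fix y z assume yz: "(y, z) \<in> E" and "z \<in> {z \<in> V. (x, z) \<in> (E \<union> E\<inverse>)\<^sup>*}"
  then have "(x, z) \<in> (E \<union> E\<inverse>)\<^sup>*" by simp
  moreover have "(z, y) \<in> E \<union> E\<inverse>" using yz by simp
  ultimately have "(x, y) \<in> (E \<union> E\<inverse>)\<^sup>*" by (rule rtrancl_into_rtrancl)
  then show "y \<in> {z \<in> V. (x, z) \<in> (E \<union> E\<inverse>)\<^sup>*}" using yz assms by auto
qed

lemma pred_closed_Diff_reach:
  assumes "E \<subseteq> V \<times> V"
  shows "pred_closed E (V - reach E s)"
  using assms by (auto simp: pred_closed_def reach_def intro: rtrancl_into_rtrancl)

lemma reach_subset: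
  assumes "E \<subseteq> V \<times> V" and "x \<in> V"
  shows "reach E x \<subseteq> V"
proof
  fix y assume "y \<in> reach E x"
  then have "(x, y) \<in> E\<^sup>*" by (simp add: reach_def)
  then show "y \<in> V" using assms by (induction rule: rtrancl_induct) auto
qed

lemma source_notin_reach:
  assumes "t \<in> sources V E" and "t \<noteq> s"
  shows "t \<notin> reach E s"
  using assms by (auto simp: sources_def reach_def elim: rtranclE)

lemma sources_Diff_reach:
  assumes "E \<subseteq> V \<times> V"
  shows "sources V E - {s} \<subseteq> sources (V - reach E s) (E \<inter> (V - reach E s) \<times> (V - reach E s))"
proof -
  have "sources V E - {s} \<subseteq> sources V E \<inter> (V - reach E s)"
    using source_notin_reach[of _ V E s] by (auto simp: sources_def)
  then show ?thesis
    using sources_restrict_pred_closed[OF Diff_subset pred_closed_Diff_reach[OF assms]] by simp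
qed

lemma elim_forest_sources_subset:
  "elim_forest V E N A \<Longrightarrow> E \<subseteq> V \<times> V \<Longrightarrow> sources V E \<subseteq> N"
proof (induction rule: elim_forest.induct)
  case empty
  then show ?case by (simp add: sources_def)
next
  case (disconnected V E NF AF)
  show ?case
  proof
    fix t assume t: "t \<in> sources V E"
    define C where "C = ug_component V E t"
    have "t \<in> V" using t by (simp add: sources_def)
    then have C: "C \<in> ug_components V E" and "t \<in> C" and "C \<subseteq> V"
      by (auto simp: C_def ug_components_def ug_component_def)
    then have "t \<in> sources C (E \<inter> C \<times> C)"
      using t sources_restrict_pred_closed[OF _ pred_closed_ug_component[OF disconnected.prems]]
      by (simp add: C_def)
    then show "t \<in> (\<Union>C\<in>ug_components V E. NF C)" using disconnected.IH C by blast
  qed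
next
  case (one_source V E s)
  then show ?case by simp
next
  case (many_sources V E s t N A)
  then show ?case using sources_Diff_reach[of E V s] by auto
qed

definition private_common_descendant :: "'a set \<Rightarrow> ('a \<times> 'a) set \<Rightarrow> 'a \<Rightarrow> 'a \<Rightarrow> 'a \<Rightarrow> bool" where
  "private_common_descendant V E u v w \<longleftrightarrow>
     u \<in> sources V E \<and> v \<in> sources V E \<and> w \<in> reach E u \<inter> reach E v \<and>
     (\<forall>s\<in>sources V E - {u, v}. w \<notin> reach E s)"

lemma private_common_descendant_mem:
  assumes "E \<subseteq> V \<times> V" and "private_common_descendant V E u v w"
  shows "w \<in> V"
proof -
  have "u \<in> V" and "w \<in> reach E u"
    using assms(2) by (auto simp: private_common_descendant_def sources_def)
  then show ?thesis using reach_subset[OF assms(1)] by blast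
qed

lemma private_common_descendant_restrict:
  assumes "private_common_descendant V E u v w"
    and "S \<subseteq> V" and "pred_closed E S" and "w \<in> S"
  shows "private_common_descendant S (E \<inter> S \<times> S) u v w"
proof -
  have "u \<in> S" and "v \<in> S"
    using assms rtrancl_restrict_pred_closed[OF assms(3) _ assms(4)]
    by (auto simp: private_common_descendant_def reach_def)
  then show ?thesis
    using assms
    by (auto simp: private_common_descendant_def sources_restrict_pred_closed mem_reach_restrict_iff)
qed

lemma elim_forest_private_common_descendant_comparable:
  "elim_forest V E N A \<Longrightarrow> E \<subseteq> V \<times> V \<Longrightarrow> private_common_descendant V E u v w \<Longrightarrow> u \<noteq> v
   \<Longrightarrow> (u, v) \<in> A \<or> (v, u) \<in> A"
proof (induction rule: elim_forest.induct)
  case empty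
  then show ?case by (simp add: private_common_descendant_def sources_def)
next
  case (disconnected V E NF AF)
  define C where "C = ug_component V E w"
  have "w \<in> V" using private_common_descendant_mem[OF disconnected.prems(1,2)] .
  then have C: "C \<in> ug_components V E" and "w \<in> C" and "C \<subseteq> V"
    by (auto simp: C_def ug_components_def ug_component_def)
  then have "private_common_descendant C (E \<inter> C \<times> C) u v w"
    using private_common_descendant_restrict[OF disconnected.prems(2)]
      pred_closed_ug_component[OF disconnected.prems(1)]
    by (simp add: C_def)
  then have "(u, v) \<in> AF C \<or> (v, u) \<in> AF C" using disconnected.IH C disconnected.prems(3) by blast
  then show ?case using C by blast
next
  case (one_source V E s)
  then show ?case by (auto simp: private_common_descendant_def)
next
  case (many_sources V E s t N A)
  define V' where "V' = V - reach E s"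
  have "sources V E - {s} \<subseteq> N"
    using sources_Diff_reach[OF many_sources.prems(1), of s]
      elim_forest_sources_subset[OF many_sources.hyps(5)]
    by auto
  then have root_case: "(u, v) \<in> {s} \<times> N \<or> (v, u) \<in> {s} \<times> N" if "s \<in> {u, v}"
    using that many_sources.prems by (auto simp: private_common_descendant_def)
  have "w \<in> V'" if "s \<notin> {u, v}"
    using that many_sources.hyps(2) many_sources.prems(2)
      private_common_descendant_mem[OF many_sources.prems(1,2)]
    by (auto simp: V'_def private_common_descendant_def)
  then have "private_common_descendant V' (E \<inter> V' \<times> V') u v w" if "s \<notin> {u, v}"
    using that private_common_descendant_restrict[OF many_sources.prems(2) Diff_subset
        pred_closed_Diff_reach[OF many_sources.prems(1)]]
    by (simp add: V'_def)
  then have "(u, v) \<in> A \<or> (v, u) \<in> A" if "s \<notin> {u, v}"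
    using that many_sources.IH many_sources.prems(3) by (simp add: V'_def)
  then show ?case using root_case by blast
qed

theorem mainTheorem5:
  fixes V :: "'a set" and E :: "('a \<times> 'a) set" and u v w :: 'a
  assumes "is_dag V E"
    and "u \<in> sources V E" and "v \<in> sources V E" and "u \<noteq> v"
    and "w \<in> reach E u \<inter> reach E v"
    and "\<forall>s\<in>sources V E - {u, v}. w \<notin> reach E s"
  shows "\<forall>N A. elim_forest V E N A \<longrightarrow> (u, v) \<in> A \<or> (v, u) \<in> A"
proof (intro allI impI)
  fix N A assume forest: "elim_forest V E N A"
  have "E \<subseteq> V \<times> V" using assms(1) by (simp add: is_dag_def)
  moreover have "private_common_descendant V E u v w"
    using assms(2-6) by (simp add: private_common_descendant_def)
  ultimately show "(u, v) \<in> A \<or> (v, u) \<in> A"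
    using elim_forest_private_common_descendant_comparable[OF forest _ _ assms(4)] by simp
qed

end
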